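(* Let $n\ge3$ and $k$ be an integer with $1\le k<\lfloor n/2\rfloor$. Then there is a bijection between $\mathcal D_{k,n}$ and the set $\mathcal A_{k+1}$ of non-interval permutations of length $k+1$; in particular $|\mathcal D_{k,n}|=|\mathcal A_{k+1}|$. (Explicitly, with $\mathcal B_{k+1}=\{\tilde b: b\in\mathcal A_{k+1}\}$, the map $u\mapsto{\rm red}(u\,a)$ with $a=\min([n]\setminus{\rm alph}(u))$ is a bijection $\mathcal D_{k,n}\to\mathcal B_{k+1}$.)
   Context: $[m,n]=\{m,\ldots,n\}$, $[n]=[1,n]$; ${\rm alph}(w)$ is the set of letters of $w$; $\tilde w$ is the reversal of a word $w$. For a word $\tau$ of distinct positive integers, ${\rm red}(\tau)$ replaces the smallest letter by $1$, the second smallest by $2$, etc. A finite set $A\subset\mathbb P$ with $|A|\ge2$ is periodic if the differences between consecutive elements (in increasing order) are all equal. For $n\ge3$, $k\in[n-2]$, $\mathcal D_{k,n}$ is the set of words $u=u_1\cdots u_k$ of $k$ distinct letters of $[n]$ such that $[n]\setminus\{u_1,\ldots,u_k\}$ is periodic and for every $j<k$ the set $[n]\setminus\{u_1,\ldots,u_j\}$ is not periodic. A permutation $s=s_1\cdots s_N$ of $[N]$, $N\ge2$, is non-interval if for every $l$ with $2\le l<N$ the set $\{s_1,\ldots,s_l\}$ is not of the form $[c,c+l-1]$ for any integer $c$. *)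

theory Defs
  imports Main
begin

definition periodic :: "nat set \<Rightarrow> bool" where
  "periodic A \<longleftrightarrow> finite A \<and> card A \<ge> 2 \<and>
     (let xs = sorted_list_of_set A in
       \<forall>i j. Suc i < length xs \<and> Suc j < length xs \<longrightarrow>
         xs ! Suc i - xs ! i = xs ! Suc j - xs ! j)"

definition Dset :: "nat \<Rightarrow> nat \<Rightarrow> nat list set" where
  "Dset k n = {u. length u = k \<and> distinct u \<and> set u \<subseteq> {1..n} \<and>
      periodic ({1..n} - set u) \<and>
      (\<forall>j. 1 \<le> j \<and> j < k \<longrightarrow> \<not> periodic ({1..n} - set (take j u)))}"

definition red :: "nat list \<Rightarrow> nat list" where
  "red w = map (\<lambda>x. card {y \<in> set w. y \<le> x}) w"

definition non_interval :: "nat list \<Rightarrow> bool" where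
  "non_interval s \<longleftrightarrow> length s \<ge> 2 \<and> distinct s \<and> set s = {1..length s} \<and>
     (\<forall>l. 2 \<le> l \<and> l < length s \<longrightarrow>
        \<not> (\<exists>c::int. int ` set (take l s) = {c..c + int l - 1}))"

definition Aset :: "nat \<Rightarrow> nat list set" where
  "Aset N = {s. length s = N \<and> non_interval s}"

definition Bset :: "nat \<Rightarrow> nat list set" where
  "Bset N = rev ` Aset N"

definition amin :: "nat \<Rightarrow> nat list \<Rightarrow> nat" where
  "amin n u = Min ({1..n} - set u)"

end

theory Submission
  imports Defs
begin

text \<open>
  For \<open>k < n/2\<close> every set \<open>[n] - {u\<^sub>1, \<dots>, u\<^sub>j}\<close> with \<open>j \<le> k\<close> has at least
  \<open>(n + 2)/2\<close> elements, and a periodic subset of \<open>[n]\<close> that large has common difference 1.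
  So periodicity may be replaced by being an interval: \<open>u \<in> D\<^sub>k\<^sub>,\<^sub>n\<close> iff the letters
  missing from \<open>u\<close> form a block \<open>{a..a + c}\<close> with \<open>c = n - k - 1\<close> (so \<open>a = amin n u\<close>)
  and no proper prefix of \<open>u\<close> leaves an interval.

  Standardising \<open>u a\<close> collapses this block to the single letter \<open>a\<close>. The collapse is
  monotone with unit steps and injective off the block, so the complement of a prefix
  \<open>u\<^sub>1 \<dots> u\<^sub>j\<close> is an interval iff the corresponding suffix of \<open>red (u a)\<close> is; after
  reversal this is exactly the non-interval condition defining \<open>A\<^sub>k\<^sub>+\<^sub>1\<close>. Expanding the
  last letter of a word of \<open>B\<^sub>k\<^sub>+\<^sub>1\<close> back into a block inverts the map.
\<close>

definition ord_connected :: "nat set \<Rightarrow> bool" where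
  "ord_connected X \<longleftrightarrow> (\<forall>x\<in>X. \<forall>y\<in>X. {x..y} \<subseteq> X)"

lemma ord_connected_atLeastAtMost [simp]: "ord_connected {p..q}"
  unfolding ord_connected_def by auto

lemma ord_connected_atLeastLessThan [simp]: "ord_connected {p..<q}"
  unfolding ord_connected_def by auto

lemma ord_connected_iff_eq_atLeastAtMost:
  assumes "finite X" "X \<noteq> {}"
  shows "ord_connected X \<longleftrightarrow> X = {Min X..Max X}"
proof
  assume "ord_connected X"
  moreover have "Min X \<in> X" "Max X \<in> X" using assms by simp_all
  ultimately have "{Min X..Max X} \<subseteq> X" unfolding ord_connected_def by blast
  with assms show "X = {Min X..Max X}" by auto
qed (metis ord_connected_atLeastAtMost)

lemma ord_connected_iff_interval_of_card:
  assumes "finite X" "X \<noteq> {}"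
  shows "ord_connected X \<longleftrightarrow> (\<exists>a. X = {a..a + (card X - 1)})"
proof
  assume "ord_connected X"
  moreover have "Min X \<le> Max X" using assms by simp
  ultimately obtain p q where "X = {p..q}" "p \<le> q"
    using ord_connected_iff_eq_atLeastAtMost assms by blast
  then show "\<exists>a. X = {a..a + (card X - 1)}" by auto
qed (metis ord_connected_atLeastAtMost)

lemma int_image_interval_iff_ord_connected:
  assumes "finite X" "X \<noteq> {}"
  shows "(\<exists>c::int. int ` X = {c..c + int (card X) - 1}) \<longleftrightarrow> ord_connected X"
proof
  assume "\<exists>c::int. int ` X = {c..c + int (card X) - 1}"
  then obtain c :: int where c: "int ` X = {c..c + int (card X) - 1}" by blast
  show "ord_connected X" unfolding ord_connected_def
  proof (intro ballI subsetI)
    fix x y z assume "x \<in> X" "y \<in> X" "z \<in> {x..y}"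
    then have "int x \<ge> c" "int y \<le> c + int (card X) - 1" "int x \<le> int z" "int z \<le> int y"
      using c by auto
    then have "int z \<in> int ` X" unfolding c by simp
    then show "z \<in> X" by auto
  qed
next
  assume "ord_connected X"
  then obtain a where a: "X = {a..a + (card X - 1)}"
    using ord_connected_iff_interval_of_card assms by blast
  have "card X \<ge> 1" using assms by (simp add: Suc_leI card_gt_0_iff)
  have "int ` X = {int a..int (a + (card X - 1))}"
    by (subst a) (rule image_int_atLeastAtMost)
  also have "int (a + (card X - 1)) = int a + int (card X) - 1"
    using \<open>card X \<ge> 1\<close> by (simp add: of_nat_diff)
  finally show "\<exists>c::int. int ` X = {c..c + int (card X) - 1}" by blast
qed

lemma ord_connected_image_unit_steps:
  assumes steps: "\<And>i. \<bar>int (f (Suc i)) - int (f i)\<bar> \<le> 1" and T: "ord_connected T"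
  shows "ord_connected (f ` T)"
  unfolding ord_connected_def
proof (intro ballI subsetI)
  fix x' y' z assume "x' \<in> f ` T" "y' \<in> f ` T" and z: "z \<in> {x'..y'}"
  then obtain x y where xy: "x \<in> T" "y \<in> T" "x' = f x" "y' = f y" by blast
  have "\<exists>i\<in>{min x y..max x y}. f i = z"
  proof (cases "x \<le> y")
    case True
    then show ?thesis
      using nat_intermed_int_val[of x y "\<lambda>i. int (f i)" "int z"] steps z xy by auto
  next
    case False
    have "\<bar>- int (f (Suc i)) - - int (f i)\<bar> \<le> 1" for i using steps[of i] by linarith
    then show ?thesis
      using nat_intermed_int_val[of y x "\<lambda>i. - int (f i)" "- int z"] False z xy by auto
  qed
  moreover have "{min x y..max x y} \<subseteq> T" using T xy unfolding ord_connected_def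
    by (cases "x \<le> y") auto
  ultimately show "z \<in> f ` T" by blast
qed

lemma ord_connected_imp_periodic:
  assumes "finite A" "card A \<ge> 2" "ord_connected A"
  shows "periodic A"
proof -
  define m where "m = card A"
  obtain p where "A = {p..p + (m - 1)}"
    using ord_connected_iff_interval_of_card assms unfolding m_def by fastforce
  moreover have "m \<ge> 2" using assms(2) unfolding m_def .
  ultimately have "A = {p..<p + m}" by auto
  then have "sorted_list_of_set A = [p..<p + m]" by simp
  then show ?thesis using assms unfolding periodic_def Let_def by simp
qed

lemma periodic_sorted_list_arith_prog:
  assumes "periodic A"
  obtains d where "d \<ge> 1"
    and "\<And>i. i < card A \<Longrightarrow> sorted_list_of_set A ! i = sorted_list_of_set A ! 0 + i * d"
proof -
  define xs where "xs = sorted_list_of_set A"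
  define d where "d = xs ! 1 - xs ! 0"
  have m2: "card A \<ge> 2" and len: "length xs = card A"
    using assms unfolding periodic_def xs_def by simp_all
  have diff: "\<forall>i j. Suc i < card A \<and> Suc j < card A \<longrightarrow> xs ! Suc i - xs ! i = xs ! Suc j - xs ! j"
    using assms len unfolding periodic_def Let_def xs_def by metis
  have less: "xs ! i < xs ! Suc i" if "Suc i < card A" for i
    using that len sorted_wrt_nth_less[of "(<)" xs i "Suc i"] unfolding xs_def by simp
  have step: "xs ! Suc i = xs ! i + d" if "Suc i < card A" for i
  proof -
    have "xs ! Suc i - xs ! i = d"
      using diff[rule_format, of i 0] that m2 unfolding d_def by simp
    with less[OF that] show ?thesis by simp
  qed
  have "xs ! i = xs ! 0 + i * d" if "i < card A" for i
    using that by (induction i) (simp_all add: step)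
  moreover have "d \<ge> 1" using step[of 0] less[of 0] m2 by simp
  ultimately show ?thesis using that unfolding xs_def by blast
qed

lemma periodic_imp_ord_connected:
  assumes sub: "A \<subseteq> {1..n}" and big: "n + 2 \<le> 2 * card A" and per: "periodic A"
  shows "ord_connected A"
proof -
  define xs where "xs = sorted_list_of_set A"
  define m where "m = card A"
  obtain d where "d \<ge> 1" and nth: "\<And>i. i < m \<Longrightarrow> xs ! i = xs ! 0 + i * d"
    using periodic_sorted_list_arith_prog[OF per] unfolding xs_def m_def by blast
  have fin: "finite A" and m2: "m \<ge> 2"
    using per unfolding periodic_def m_def by simp_all
  have A: "A = set xs" and len: "length xs = m" using fin unfolding xs_def m_def by simp_all
  have "xs ! 0 \<in> A" "xs ! (m - 1) \<in> A" using A len m2 by (auto intro!: nth_mem)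
  then have "1 \<le> xs ! 0" "xs ! (m - 1) \<le> n" using sub by auto
  then have "1 + (m - 1) * d \<le> n" using nth[of "m - 1"] m2 by simp
  \<comment> \<open>a step \<open>d \<ge> 2\<close> would need \<open>n \<ge> 2 m - 1\<close>\<close>
  moreover have "(m - 1) * 2 \<le> (m - 1) * d" if "d \<ge> 2" using that by simp
  ultimately have "d = 1" using \<open>d \<ge> 1\<close> big m2 unfolding m_def by linarith
  have "xs = [xs ! 0..<xs ! 0 + m]"
  proof (rule nth_equalityI)
    fix i assume "i < length xs"
    then show "xs ! i = [xs ! 0..<xs ! 0 + m] ! i" using nth[of i] \<open>d = 1\<close> len by simp
  qed (simp add: len)
  then show ?thesis using A by (metis ord_connected_atLeastLessThan set_upt)
qed

lemma periodic_complement_iff_ord_connected: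
  assumes "distinct u" "set u \<subseteq> {1..n}" "2 * length u + 2 \<le> n"
  shows "periodic ({1..n} - set u) \<longleftrightarrow> ord_connected ({1..n} - set u)"
proof -
  have "card ({1..n} - set u) = n - length u"
    using assms by (simp add: card_Diff_subset distinct_card)
  then show ?thesis
    using assms periodic_imp_ord_connected[of "{1..n} - set u" n] ord_connected_imp_periodic
    by auto
qed

lemma Dset_iff_ord_connected:
  assumes "2 * k + 2 \<le> n"
  shows "u \<in> Dset k n \<longleftrightarrow> length u = k \<and> distinct u \<and> set u \<subseteq> {1..n} \<and>
    ord_connected ({1..n} - set u) \<and>
    (\<forall>j. 1 \<le> j \<and> j < k \<longrightarrow> \<not> ord_connected ({1..n} - set (take j u)))"
proof (cases "length u = k \<and> distinct u \<and> set u \<subseteq> {1..n}")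
  case True
  have prefix: "periodic ({1..n} - set (take j u)) \<longleftrightarrow> ord_connected ({1..n} - set (take j u))"
    if "j \<le> k" for j
    using True that assms set_take_subset[of j u]
    by (intro periodic_complement_iff_ord_connected) auto
  show ?thesis using True prefix prefix[of k] unfolding Dset_def by auto
qed (auto simp: Dset_def)

lemma Diff_Diff_block:
  fixes a c n :: nat
  shows "1 \<le> a \<Longrightarrow> a + c \<le> n \<Longrightarrow> {1..n} - ({1..n} - {a..a + c}) = {a..a + c}"
  by (rule double_diff) auto

lemma ord_connected_complement_iff_block:
  assumes "distinct u" "set u \<subseteq> {1..n}" "length u < n"
  shows "ord_connected ({1..n} - set u) \<longleftrightarrow>
    (\<exists>a. 1 \<le> a \<and> a + (n - length u - 1) \<le> n \<and> set u = {1..n} - {a..a + (n - length u - 1)})"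
proof
  let ?X = "{1..n} - set u"
  have card: "card ?X = n - length u"
    using assms by (simp add: card_Diff_subset distinct_card)
  assume "ord_connected ?X"
  moreover have "?X \<noteq> {}" using card assms(3) by (metis card.empty zero_less_diff less_irrefl)
  ultimately have "\<exists>a. ?X = {a..a + (card ?X - 1)}"
    using ord_connected_iff_interval_of_card by blast
  then obtain a where a: "?X = {a..a + (n - length u - 1)}" unfolding card by blast
  then have "a \<in> ?X" "a + (n - length u - 1) \<in> ?X" by simp_all
  then have "1 \<le> a" "a + (n - length u - 1) \<le> n" by auto
  moreover have "set u = {1..n} - ?X" using assms(2) by blast
  then have "set u = {1..n} - {a..a + (n - length u - 1)}" unfolding a .
  ultimately show "\<exists>a. 1 \<le> a \<and> a + (n - length u - 1) \<le> n \<and>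
      set u = {1..n} - {a..a + (n - length u - 1)}" by blast
next
  assume "\<exists>a. 1 \<le> a \<and> a + (n - length u - 1) \<le> n \<and>
      set u = {1..n} - {a..a + (n - length u - 1)}"
  then obtain a where a: "1 \<le> a" "a + (n - length u - 1) \<le> n"
      and u: "set u = {1..n} - {a..a + (n - length u - 1)}" by blast
  show "ord_connected ({1..n} - set u)" unfolding u Diff_Diff_block[OF a] by simp
qed

lemma length_block_complement:
  assumes "distinct u" "set u = {1..n} - {a..a + c}" "1 \<le> a" "a + c \<le> n"
  shows "length u = n - c - 1"
proof -
  have "length u = card ({1..n} - {a..a + c})" using assms by (metis distinct_card)
  also have "\<dots> = n - c - 1" using assms by (simp add: card_Diff_subset)
  finally show ?thesis .
qed

definition collapse :: "nat \<Rightarrow> nat \<Rightarrow> nat \<Rightarrow> nat" where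
  "collapse a c x = (if x \<le> a then x else if x \<le> a + c then a else x - c)"

definition expand :: "nat \<Rightarrow> nat \<Rightarrow> nat \<Rightarrow> nat" where
  "expand a c y = (if y \<le> a then y else y + c)"

lemma collapse_expand [simp]: "collapse a c (expand a c y) = y"
  unfolding collapse_def expand_def by auto

lemma expand_collapse: "x \<notin> {a<..a + c} \<Longrightarrow> expand a c (collapse a c x) = x"
  unfolding collapse_def expand_def by auto

lemma collapse_self [simp]: "collapse a c a = a"
  unfolding collapse_def by simp

lemma inj_expand: "inj (expand a c)"
  by (metis collapse_expand injI)

lemma inj_on_collapse: "inj_on (collapse a c) (- {a<..a + c})"
  by (rule inj_on_inverseI[where g = "expand a c"]) (simp add: expand_collapse)

lemma collapse_mono: "x \<le> y \<Longrightarrow> collapse a c x \<le> collapse a c y"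
  unfolding collapse_def by auto

lemma collapse_eq_imp_eq: "collapse a c t = collapse a c z \<Longrightarrow> z \<notin> {a..a + c} \<Longrightarrow> t = z"
  unfolding collapse_def by (auto split: if_splits)

lemma collapse_image:
  "a + c \<le> n \<Longrightarrow> collapse a c ` ({1..n} - {a<..a + c}) = {1..n - c}"
proof (intro equalityI subsetI)
  fix y assume "a + c \<le> n" "y \<in> {1..n - c}"
  then have "expand a c y \<in> {1..n} - {a<..a + c}" "collapse a c (expand a c y) = y"
    unfolding expand_def collapse_def by auto
  then show "y \<in> collapse a c ` ({1..n} - {a<..a + c})" by (metis image_eqI)
qed (auto simp: collapse_def)

lemma ord_connected_collapse_image_iff:
  assumes block: "{a..a + c} \<subseteq> T"
  shows "ord_connected (collapse a c ` T) \<longleftrightarrow> ord_connected T"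
proof
  assume image: "ord_connected (collapse a c ` T)"
  show "ord_connected T" unfolding ord_connected_def
  proof (intro ballI subsetI)
    fix x y z assume "x \<in> T" "y \<in> T" "z \<in> {x..y}"
    moreover have "{collapse a c x..collapse a c y} \<subseteq> collapse a c ` T"
      using image \<open>x \<in> T\<close> \<open>y \<in> T\<close> unfolding ord_connected_def by blast
    ultimately have "collapse a c z \<in> collapse a c ` T"
      using collapse_mono[of x z a c] collapse_mono[of z y a c] by auto
    then obtain t where t: "t \<in> T" "collapse a c t = collapse a c z" by auto
    show "z \<in> T"
    proof (cases "z \<in> {a..a + c}")
      case False
      then show ?thesis using t collapse_eq_imp_eq[of a c t z] by simp
    qed (use block in auto)
  qed
next
  have "\<bar>int (collapse a c (Suc i)) - int (collapse a c i)\<bar> \<le> 1" for i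
    unfolding collapse_def by auto
  then show "ord_connected T \<Longrightarrow> ord_connected (collapse a c ` T)"
    by (rule ord_connected_image_unit_steps)
qed

lemma set_snoc_block_complement:
  fixes a c n :: nat
  assumes "set u = {1..n} - {a..a + c}" "1 \<le> a" "a \<le> n"
  shows "set (u @ [a]) = {1..n} - {a<..a + c}"
proof -
  have "insert a ({1..n} - {a..a + c}) = {1..n} - {a<..a + c}" using assms(2,3) by auto
  then show ?thesis using assms(1) by simp
qed

lemma red_eq_map_collapse:
  assumes "set w = {1..n} - {a<..a + c}"
  shows "red w = map (collapse a c) w"
  unfolding red_def
proof (rule map_cong[OF refl])
  fix x assume "x \<in> set w"
  then have x: "x \<in> {1..n} - {a<..a + c}" unfolding assms .
  show "card {y \<in> set w. y \<le> x} = collapse a c x"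
    unfolding assms
  proof (cases "x \<le> a")
    case True
    then have "{y \<in> {1..n} - {a<..a + c}. y \<le> x} = {1..x}" using x by auto
    then show "card {y \<in> {1..n} - {a<..a + c}. y \<le> x} = collapse a c x"
      using True by (simp add: collapse_def)
  next
    case False
    then have "x > a + c" using x by auto
    moreover have "{y \<in> {1..n} - {a<..a + c}. y \<le> x} = {1..a} \<union> {a + c<..x}"
      using x calculation by auto
    moreover have "card ({1..a} \<union> {a + c<..x}) = a + (x - (a + c))"
      by (subst card_Un_disjoint) auto
    ultimately show "card {y \<in> {1..n} - {a<..a + c}. y \<le> x} = collapse a c x"
      by (simp add: collapse_def)
  qed
qed

lemma amin_eq:
  assumes "1 \<le> a" "a + c \<le> n" "set u = {1..n} - {a..a + c}"
  shows "amin n u = a"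
proof -
  have "Min {a..a + c} = a" by (rule Min_eqI) auto
  then show ?thesis unfolding amin_def assms(3) Diff_Diff_block[OF assms(1,2)] .
qed

lemma ord_connected_suffix_collapse_iff:
  assumes "1 \<le> a" "a + c \<le> n" "distinct u" "set u = {1..n} - {a..a + c}" "j \<le> length u"
  shows "ord_connected (set (drop j (map (collapse a c) (u @ [a]))))
     \<longleftrightarrow> ord_connected ({1..n} - set (take j u))"
proof -
  have "{1..n} = set u \<union> {a..a + c}" "set u \<inter> {a..a + c} = {}"
    unfolding assms(4) using assms(1,2) by auto
  moreover have "set u = set (take j u) \<union> set (drop j u)"
    "set (take j u) \<inter> set (drop j u) = {}"
    using assms(3) by (metis append_take_drop_id set_append, metis append_take_drop_id distinct_append)
  ultimately have T: "{1..n} - set (take j u) = set (drop j u) \<union> {a..a + c}" by blast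
  have "collapse a c ` {a..a + c} = {a}"
    by (force simp: collapse_def intro: image_eqI[of a])
  then have "collapse a c ` ({1..n} - set (take j u)) = set (drop j (map (collapse a c) (u @ [a])))"
    unfolding T using assms(5) by (auto simp: drop_map)
  then show ?thesis using ord_connected_collapse_image_iff[of a c] T by (metis Un_upper2)
qed

lemma non_interval_rev_iff:
  "non_interval (rev s) \<longleftrightarrow> length s \<ge> 2 \<and> distinct s \<and> set s = {1..length s} \<and>
     (\<forall>j. 1 \<le> j \<and> j + 1 < length s \<longrightarrow> \<not> ord_connected (set (drop j s)))"
proof (cases "length s \<ge> 2 \<and> distinct s \<and> set s = {1..length s}")
  case True
  define N where "N = length s"
  have interval: "(\<exists>c::int. int ` set (take l (rev s)) = {c..c + int l - 1})
      \<longleftrightarrow> ord_connected (set (drop (N - l) s))" if "1 \<le> l" "l < N" for l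
  proof -
    have set: "set (take l (rev s)) = set (drop (N - l) s)" unfolding N_def by (simp add: take_rev)
    have card: "card (set (drop (N - l) s)) = l" using True that unfolding N_def
      by (simp add: distinct_card)
    then have "set (drop (N - l) s) \<noteq> {}" using that(1) by auto
    from int_image_interval_iff_ord_connected[OF List.finite_set this]
    show ?thesis unfolding set card .
  qed
  have "(\<forall>l. 2 \<le> l \<and> l < N \<longrightarrow> \<not> ord_connected (set (drop (N - l) s)))
      \<longleftrightarrow> (\<forall>j. 1 \<le> j \<and> j + 1 < N \<longrightarrow> \<not> ord_connected (set (drop j s)))"
  proof (intro iffI allI impI)
    fix j assume H: "\<forall>l. 2 \<le> l \<and> l < N \<longrightarrow> \<not> ord_connected (set (drop (N - l) s))"
      and j: "1 \<le> j \<and> j + 1 < N"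
    then have "2 \<le> N - j \<and> N - j < N" by linarith
    then have "\<not> ord_connected (set (drop (N - (N - j)) s))" using H by blast
    then show "\<not> ord_connected (set (drop j s))" using j by simp
  next
    fix l assume H: "\<forall>j. 1 \<le> j \<and> j + 1 < N \<longrightarrow> \<not> ord_connected (set (drop j s))"
      and l: "2 \<le> l \<and> l < N"
    then have "1 \<le> N - l \<and> N - l + 1 < N" by linarith
    then show "\<not> ord_connected (set (drop (N - l) s))" using H by blast
  qed
  then show ?thesis using True interval unfolding non_interval_def N_def by auto
qed (auto simp: non_interval_def)

lemma mem_Bset_iff:
  "s \<in> Bset N \<longleftrightarrow> length s = N \<and> N \<ge> 2 \<and> distinct s \<and> set s = {1..N} \<and>
     (\<forall>j. 1 \<le> j \<and> j + 1 < N \<longrightarrow> \<not> ord_connected (set (drop j s)))"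
proof -
  have "s \<in> Bset N \<longleftrightarrow> rev s \<in> Aset N"
    unfolding Bset_def by (metis image_eqI rev_rev_ident imageE)
  then show ?thesis unfolding Aset_def using non_interval_rev_iff[of s] by auto
qed

lemma bij_betw_rev_Bset_Aset: "bij_betw rev (Bset N) (Aset N)"
  unfolding Bset_def by (rule bij_betw_imageI) (auto simp: inj_on_def image_image)

lemma set_map_expand:
  assumes "distinct (w @ [a])" "set (w @ [a]) = {1..m}"
  shows "set (map (expand a c) w) = {1..m + c} - {a..a + c}"
proof -
  have "insert a (set w) = {1..m}" "a \<notin> set w" using assms by simp_all
  then have w: "set w = {1..m} - {a}" and a: "a \<in> {1..m}"
    by (metis Diff_insert_absorb, metis insertI1)
  have "expand a c ` ({1..m} - {a}) = {1..m + c} - {a..a + c}"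
  proof (intro equalityI subsetI)
    fix y assume y: "y \<in> {1..m + c} - {a..a + c}"
    then have "y = expand a c (collapse a c y)" by (simp add: expand_collapse)
    moreover have "collapse a c y \<in> {1..m} - {a}" using y a by (auto simp: collapse_def)
    ultimately show "y \<in> expand a c ` ({1..m} - {a})" by blast
  qed (use a in \<open>auto simp: expand_def\<close>)
  then show ?thesis using w by simp
qed

lemma collapse_word_in_Bset_iff:
  assumes "k + c + 1 = n" "1 \<le> a" "a + c \<le> n" "distinct u" "set u = {1..n} - {a..a + c}"
  shows "map (collapse a c) (u @ [a]) \<in> Bset (k + 1) \<longleftrightarrow>
    k \<ge> 1 \<and> (\<forall>j. 1 \<le> j \<and> j < k \<longrightarrow> \<not> ord_connected ({1..n} - set (take j u)))"
proof -
  have len: "length u = k"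
    using length_block_complement[OF assms(4,5,2,3)] assms(1) by simp
  have set_w: "set (u @ [a]) = {1..n} - {a<..a + c}"
    using set_snoc_block_complement[OF assms(5,2)] assms(3) by simp
  have "distinct (u @ [a])" using assms(4,5) by simp
  moreover have "inj_on (collapse a c) (set (u @ [a]))"
    using inj_on_collapse by (rule inj_on_subset) (simp only: set_w, auto)
  ultimately have "distinct (map (collapse a c) (u @ [a]))" by (simp only: distinct_map)
  moreover have "set (map (collapse a c) (u @ [a])) = {1..k + 1}"
    using collapse_image[OF assms(3)] assms(1) by (simp only: set_map set_w) simp
  moreover have "ord_connected (set (drop j (map (collapse a c) (u @ [a]))))
      \<longleftrightarrow> ord_connected ({1..n} - set (take j u))" if "j \<le> k" for j
    using ord_connected_suffix_collapse_iff[OF assms(2-5)] len that by simp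
  ultimately show ?thesis using len unfolding mem_Bset_iff by auto
qed

lemma Dset_iff_collapse_word_in_Bset:
  assumes "1 \<le> k" "2 * k + 2 \<le> n" "k + c + 1 = n"
  shows "u \<in> Dset k n \<longleftrightarrow> (\<exists>a. 1 \<le> a \<and> a + c \<le> n \<and> distinct u \<and>
    set u = {1..n} - {a..a + c} \<and> map (collapse a c) (u @ [a]) \<in> Bset (k + 1))"
proof
  assume "u \<in> Dset k n"
  then have len: "length u = k" and "distinct u" "set u \<subseteq> {1..n}"
    and "ord_connected ({1..n} - set u)"
    and prefixes: "\<forall>j. 1 \<le> j \<and> j < k \<longrightarrow> \<not> ord_connected ({1..n} - set (take j u))"
    using Dset_iff_ord_connected[OF assms(2)] by blast+
  moreover have "length u < n" using len assms(3) by simp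
  ultimately have "\<exists>a. 1 \<le> a \<and> a + (n - length u - 1) \<le> n \<and>
      set u = {1..n} - {a..a + (n - length u - 1)}"
    using ord_connected_complement_iff_block by blast
  moreover have "n - length u - 1 = c" using len assms(3) by simp
  ultimately obtain a where "1 \<le> a" "a + c \<le> n" "set u = {1..n} - {a..a + c}" by auto
  with \<open>distinct u\<close> prefixes show "\<exists>a. 1 \<le> a \<and> a + c \<le> n \<and> distinct u \<and>
      set u = {1..n} - {a..a + c} \<and> map (collapse a c) (u @ [a]) \<in> Bset (k + 1)"
    using collapse_word_in_Bset_iff assms by blast
next
  assume "\<exists>a. 1 \<le> a \<and> a + c \<le> n \<and> distinct u \<and>
    set u = {1..n} - {a..a + c} \<and> map (collapse a c) (u @ [a]) \<in> Bset (k + 1)"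
  then obtain a where a: "1 \<le> a" "a + c \<le> n" "distinct u" "set u = {1..n} - {a..a + c}"
      and "map (collapse a c) (u @ [a]) \<in> Bset (k + 1)" by blast
  then have "\<forall>j. 1 \<le> j \<and> j < k \<longrightarrow> \<not> ord_connected ({1..n} - set (take j u))"
    using collapse_word_in_Bset_iff[OF assms(3) a] by blast
  moreover have "length u = k"
    using length_block_complement[OF a(3,4,1,2)] assms(3) by simp
  moreover have "set u \<subseteq> {1..n}" unfolding a(4) by blast
  moreover have "ord_connected ({1..n} - set u)" unfolding a(4) Diff_Diff_block[OF a(1,2)] by simp
  ultimately show "u \<in> Dset k n" using Dset_iff_ord_connected[OF assms(2)] a(3) by blast
qed

lemma red_snoc_amin_eq:
  assumes "1 \<le> a" "a + c \<le> n" "set u = {1..n} - {a..a + c}"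
  shows "red (u @ [amin n u]) = map (collapse a c) (u @ [a])"
proof -
  have "set (u @ [a]) = {1..n} - {a<..a + c}"
    using set_snoc_block_complement[OF assms(3,1)] assms(2) by simp
  then show ?thesis unfolding amin_eq[OF assms] by (rule red_eq_map_collapse)
qed

lemma expand_butlast:
  assumes "s \<noteq> []" "distinct s" "set s = {1..k + 1}" "k + c + 1 = n"
  defines "u \<equiv> map (expand (last s) c) (butlast s)"
  shows "1 \<le> last s" "last s + c \<le> n" "distinct u" "set u = {1..n} - {last s..last s + c}"
    and "map (collapse (last s) c) (u @ [last s]) = s"
proof -
  have s_eq: "butlast s @ [last s] = s" using assms(1) by simp
  have "last s \<in> {1..k + 1}" using assms(1,3) by (metis last_in_set)
  then show "1 \<le> last s" "last s + c \<le> n" using assms(4) by auto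
  show "set u = {1..n} - {last s..last s + c}"
    using set_map_expand[of "butlast s" "last s" "k + 1" c] assms(2-4)
    unfolding u_def s_eq by simp
  show "distinct u"
    using assms(2) inj_on_subset[OF inj_expand] unfolding u_def
    by (simp add: distinct_map distinct_butlast)
  show "map (collapse (last s) c) (u @ [last s]) = s"
    unfolding u_def using s_eq by (simp add: comp_def)
qed

lemma bij_betw_Dset_Bset:
  assumes "1 \<le> k" "2 * k + 2 \<le> n"
  shows "bij_betw (\<lambda>u. red (u @ [amin n u])) (Dset k n) (Bset (k + 1))"
proof -
  define c where "c = n - k - 1"
  define F where "F u = red (u @ [amin n u])" for u
  define G where "G s = map (expand (last s) c) (butlast s)" for s
  have c: "k + c + 1 = n" using assms(2) unfolding c_def by simp
  note D_iff = Dset_iff_collapse_word_in_Bset[OF assms c]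
  have forward: "F u \<in> Bset (k + 1) \<and> G (F u) = u" if u: "u \<in> Dset k n" for u
  proof -
    obtain a where a: "1 \<le> a" "a + c \<le> n" "set u = {1..n} - {a..a + c}"
        and B: "map (collapse a c) (u @ [a]) \<in> Bset (k + 1)"
      using D_iff[THEN iffD1, OF u] by blast
    have "\<forall>x\<in>set u. expand a c (collapse a c x) = x" unfolding a(3) by (simp add: expand_collapse)
    then have "G (F u) = u" unfolding F_def red_snoc_amin_eq[OF a] G_def by (simp add: map_idI)
    then show ?thesis using B red_snoc_amin_eq[OF a] unfolding F_def by simp
  qed
  have backward: "G s \<in> Dset k n \<and> F (G s) = s" if s: "s \<in> Bset (k + 1)" for s
  proof -
    have "s \<noteq> []" "distinct s" "set s = {1..k + 1}" using s unfolding mem_Bset_iff by auto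
    note G = expand_butlast[OF this c, folded G_def]
    have "G s \<in> Dset k n"
      by (intro D_iff[THEN iffD2] exI[of _ "last s"]) (use G s in simp)
    moreover have "F (G s) = s" using red_snoc_amin_eq[OF G(1,2,4)] G(5) unfolding F_def by simp
    ultimately show ?thesis by blast
  qed
  show ?thesis unfolding F_def[symmetric]
    by (rule bij_betw_byWitness[where f' = G]) (use forward backward in auto)
qed

theorem mainTheorem11:
  fixes n k :: nat
  assumes "n \<ge> 3" and "1 \<le> k" and "k < n div 2"
  shows "(\<exists>f. bij_betw f (Dset k n) (Aset (k + 1)))
       \<and> card (Dset k n) = card (Aset (k + 1))
       \<and> bij_betw (\<lambda>u. red (u @ [amin n u])) (Dset k n) (Bset (k + 1))"
proof -
  have "2 * k + 2 \<le> n" using assms(3) by linarith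
  then have D_B: "bij_betw (\<lambda>u. red (u @ [amin n u])) (Dset k n) (Bset (k + 1))"
    using bij_betw_Dset_Bset assms(2) by blast
  then have "bij_betw (rev \<circ> (\<lambda>u. red (u @ [amin n u]))) (Dset k n) (Aset (k + 1))"
    using bij_betw_trans bij_betw_rev_Bset_Aset by blast
  then show ?thesis using D_B bij_betw_same_card by blast
qed

end
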